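(* As $d \to \infty$, \[ m_{\mathcal S}(d) \geq (1+o(1))\frac{\log d}{\log \log d}, \] where $\mathcal S$ is the class of star forests. In other words, there is a function $\varepsilon(d) \to 0$ as $d\to\infty$ such that for every $d$ there exists a family of at least $(1+\varepsilon(d))\frac{\log d}{\log\log d}$ star forests (minus one) — more precisely, a family of $m_{\mathcal S}(d)-1$ star forests — showing that $m_{\mathcal S}(d) \geq (1+\varepsilon(d))\frac{\log d}{\log \log d}$.
   Context: All graphs are finite. Given a family $\mathcal G = \{G_1,\dots,G_k\}$ of graphs all spanning a common vertex set $V$, a cooperative coloring of $\mathcal G$ is a family of sets $R_1,\dots,R_k \subseteq V$ such that each $R_i$ is an independent set of $G_i$ and $V = \bigcup_{i=1}^k R_i$. For a graph class $\mathcal H$, $m_{\mathcal H}(d)$ denotes the minimum value $m$ such that every family $\mathcal G$ of at least $m$ graphs from $\mathcal H$, each of maximum degree at most $d$, spanning a common vertex set, has a cooperative coloring. A star forest is a graph each of whose connected components is a star (a tree with at most one vertex of degree greater than $1$). $\mathcal S$ denotes the class of star forests. Logarithms are natural, and asymptotic notation is as $d \to \infty$. *)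

theory Defs
  imports "HOL-Analysis.Analysis"
begin

text \<open>Simple graphs on a finite vertex set V (vertices taken from nat, which is
no loss of generality since every finite graph is isomorphic to one on nat),
given by a symmetric irreflexive edge relation supported on V.\<close>

definition graph_on :: "nat set \<Rightarrow> (nat \<Rightarrow> nat \<Rightarrow> bool) \<Rightarrow> bool" where
  "graph_on V E \<longleftrightarrow> (\<forall>u v. E u v \<longrightarrow> u \<in> V \<and> v \<in> V) \<and> (\<forall>u v. E u v \<longrightarrow> E v u) \<and> (\<forall>u. \<not> E u u)"

definition connected_set :: "(nat \<Rightarrow> nat \<Rightarrow> bool) \<Rightarrow> nat set \<Rightarrow> bool" where
  "connected_set E C \<longleftrightarrow> C \<noteq> {} \<and>
     (\<forall>u\<in>C. \<forall>v\<in>C. (\<lambda>x y. E x y \<and> x \<in> C \<and> y \<in> C)\<^sup>*\<^sup>* u v)"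

definition is_cycle :: "(nat \<Rightarrow> nat \<Rightarrow> bool) \<Rightarrow> nat list \<Rightarrow> bool" where
  "is_cycle E xs \<longleftrightarrow> length xs \<ge> 3 \<and> distinct xs \<and>
     (\<forall>i < length xs. E (xs ! i) (xs ! ((i + 1) mod length xs)))"

definition acyclic_on :: "(nat \<Rightarrow> nat \<Rightarrow> bool) \<Rightarrow> nat set \<Rightarrow> bool" where
  "acyclic_on E C \<longleftrightarrow> \<not> (\<exists>xs. set xs \<subseteq> C \<and> is_cycle E xs)"

definition is_tree :: "(nat \<Rightarrow> nat \<Rightarrow> bool) \<Rightarrow> nat set \<Rightarrow> bool" where
  "is_tree E C \<longleftrightarrow> connected_set E C \<and> acyclic_on E C"

definition is_star :: "(nat \<Rightarrow> nat \<Rightarrow> bool) \<Rightarrow> nat set \<Rightarrow> bool" where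
  "is_star E C \<longleftrightarrow> is_tree E C \<and> card {v \<in> C. card {u \<in> C. E v u} > 1} \<le> 1"

definition component :: "nat set \<Rightarrow> (nat \<Rightarrow> nat \<Rightarrow> bool) \<Rightarrow> nat \<Rightarrow> nat set" where
  "component V E v = {u \<in> V. E\<^sup>*\<^sup>* v u}"

definition star_forest :: "nat set \<Rightarrow> (nat \<Rightarrow> nat \<Rightarrow> bool) \<Rightarrow> bool" where
  "star_forest V E \<longleftrightarrow> graph_on V E \<and> (\<forall>v\<in>V. is_star E (component V E v))"

definition max_deg_le :: "nat set \<Rightarrow> (nat \<Rightarrow> nat \<Rightarrow> bool) \<Rightarrow> nat \<Rightarrow> bool" where
  "max_deg_le V E d \<longleftrightarrow> (\<forall>v\<in>V. card {u \<in> V. E v u} \<le> d)"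

definition independent :: "(nat \<Rightarrow> nat \<Rightarrow> bool) \<Rightarrow> nat set \<Rightarrow> bool" where
  "independent E R \<longleftrightarrow> (\<forall>u\<in>R. \<forall>v\<in>R. \<not> E u v)"

definition coop_coloring :: "nat set \<Rightarrow> (nat \<Rightarrow> nat \<Rightarrow> nat \<Rightarrow> bool) \<Rightarrow> nat \<Rightarrow> bool" where
  "coop_coloring V G k \<longleftrightarrow> (\<exists>R :: nat \<Rightarrow> nat set.
     (\<forall>i<k. R i \<subseteq> V \<and> independent (G i) (R i)) \<and> V = (\<Union>i<k. R i))"

definition mS_good :: "nat \<Rightarrow> nat \<Rightarrow> bool" where
  "mS_good d m \<longleftrightarrow> (\<forall>(V :: nat set) (k :: nat) (G :: nat \<Rightarrow> nat \<Rightarrow> nat \<Rightarrow> bool).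
      finite V \<and> k \<ge> m \<and> (\<forall>i<k. star_forest V (G i) \<and> max_deg_le V (G i) d)
      \<longrightarrow> coop_coloring V G k)"

definition mS :: "nat \<Rightarrow> nat" where
  "mS d = (LEAST m. mS_good d m)"

end

(*
  Take as vertices the words of distinct letters from {0..<k} and let G_i join every word
  s to every word s i r extending it by the letter i. Each G_i is a star forest: a word
  containing i is a leaf hanging off its prefix before i. All degrees are below the number
  of vertices, which is at most (k+1)^(k+1). Given a cooperative colouring, start from the empty word and
  repeatedly append the colour of the current word. No extension of the word built so far
  is coloured by one of its letters, since the current word is adjacent in G_i to every
  extension of its extension by i. After k steps the word contains every colour, a
  contradiction. Hence m_S(d) > k whenever (k+1)^(k+1) <= d, which gives
  m_S(d) >= log d / log log d - 1.

  Since m_S(d) is defined as a least element, some finite m must be good as well: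
  2d+1 star forests of maximum degree d always admit a cooperative colouring, by a
  Hall-type distribution argument.
*)

theory Submission
  imports Defs "HOL-Library.Countable" "HOL-Real_Asymp.Real_Asymp"
begin

section \<open>Star forests as graphs with marked centres\<close>

definition centre_marking :: "(nat \<Rightarrow> nat \<Rightarrow> bool) \<Rightarrow> (nat \<Rightarrow> bool) \<Rightarrow> bool" where
  "centre_marking E cen \<longleftrightarrow>
     (\<forall>u v. E u v \<longrightarrow> (cen u \<longleftrightarrow> \<not> cen v)) \<and>
     (\<forall>v a b. \<not> cen v \<longrightarrow> E v a \<longrightarrow> E v b \<longrightarrow> a = b)"

lemma acyclic_on_if_edges_meet:
  assumes meet: "\<And>x y. x \<in> C \<Longrightarrow> y \<in> C \<Longrightarrow> E x y \<Longrightarrow> x = \<rho> \<or> y = \<rho>"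
  shows "acyclic_on E C"
  unfolding acyclic_on_def
proof
  assume "\<exists>xs. set xs \<subseteq> C \<and> is_cycle E xs"
  then obtain xs where C: "set xs \<subseteq> C" and n: "length xs \<ge> 3" and dist: "distinct xs"
    and edge: "\<And>i. i < length xs \<Longrightarrow> E (xs ! i) (xs ! ((i + 1) mod length xs))"
    unfolding is_cycle_def by blast
  let ?n = "length xs"
  have at_hub: "xs ! i = \<rho> \<or> xs ! ((i + 1) mod ?n) = \<rho>" if "i < ?n" for i
  proof (rule meet)
    show "xs ! i \<in> C" using C that by auto
    have "(i + 1) mod ?n < ?n" using n by (intro mod_less_divisor) linarith
    then show "xs ! ((i + 1) mod ?n) \<in> C" using C by auto
  qed (rule edge[OF that])
  have distinct_nth: "xs ! i \<noteq> xs ! j" if "i < ?n" "j < ?n" "i \<noteq> j" for i j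
    using that by (simp add: dist nth_eq_iff_index_eq)
  have "xs \<noteq> []" "3 mod ?n \<noteq> 1" "3 mod ?n < ?n" using n by (cases "?n = 3"; auto)+
  then have "xs ! 0 \<noteq> xs ! 2" "xs ! 1 \<noteq> xs ! 2" "xs ! 1 \<noteq> xs ! (3 mod ?n)"
    using n distinct_nth[of 0 2] distinct_nth[of 1 2] distinct_nth[of 1 "3 mod ?n"] by auto
  moreover have "xs ! 0 = \<rho> \<or> xs ! 1 = \<rho>" "xs ! 1 = \<rho> \<or> xs ! 2 = \<rho>"
    "xs ! 2 = \<rho> \<or> xs ! (3 mod ?n) = \<rho>"
    using at_hub[of 0] at_hub[of 1] at_hub[of 2] n \<open>xs \<noteq> []\<close>
    by (simp_all add: numeral_2_eq_2 numeral_3_eq_3)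
  ultimately show False by metis
qed

lemma is_star_if_hub:
  assumes sym: "\<And>x y. E x y \<Longrightarrow> E y x" and hub: "\<rho> \<in> C"
    and spoke: "\<And>x. x \<in> C \<Longrightarrow> x \<noteq> \<rho> \<Longrightarrow> E x \<rho>"
    and only_hub: "\<And>x y. x \<in> C \<Longrightarrow> x \<noteq> \<rho> \<Longrightarrow> E x y \<Longrightarrow> y = \<rho>"
  shows "is_star E C"
proof -
  let ?R = "\<lambda>x y. E x y \<and> x \<in> C \<and> y \<in> C"
  have to_hub: "?R\<^sup>*\<^sup>* x \<rho>" if "x \<in> C" for x
    using that hub spoke[OF that] by (cases "x = \<rho>") auto
  have from_hub: "?R\<^sup>*\<^sup>* \<rho> x" if "x \<in> C" for x
    using that hub spoke[OF that] sym by (cases "x = \<rho>") auto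
  have "connected_set E C"
    unfolding connected_set_def using hub to_hub from_hub by (blast intro: rtranclp_trans)
  moreover have "acyclic_on E C"
    by (rule acyclic_on_if_edges_meet) (use only_hub in blast)
  moreover have "{v \<in> C. card {u \<in> C. E v u} > 1} \<subseteq> {\<rho>}"
  proof (rule subsetI, rule ccontr)
    fix v assume v: "v \<in> {v \<in> C. card {u \<in> C. E v u} > 1}" "v \<notin> {\<rho>}"
    then have "{u \<in> C. E v u} \<subseteq> {\<rho>}" using only_hub by auto
    then have "card {u \<in> C. E v u} \<le> 1" using card_mono[of "{\<rho>}"] by fastforce
    then show False using v by simp
  qed
  then have "card {v \<in> C. card {u \<in> C. E v u} > 1} \<le> 1"
    using card_mono[of "{\<rho>}"] by fastforce
  ultimately show ?thesis unfolding is_star_def is_tree_def by blast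
qed

definition centre_of :: "(nat \<Rightarrow> nat \<Rightarrow> bool) \<Rightarrow> (nat \<Rightarrow> bool) \<Rightarrow> nat \<Rightarrow> nat" where
  "centre_of E cen u = (if \<not> cen u \<and> (\<exists>v. E u v) then THE v. E u v else u)"

lemma centre_of_leaf:
  assumes "centre_marking E cen" "\<not> cen u" "E u v"
  shows "centre_of E cen u = v"
proof -
  have "(THE v. E u v) = v"
    using assms unfolding centre_marking_def by (intro the_equality) blast+
  then show ?thesis using assms(2,3) unfolding centre_of_def by auto
qed

lemma centre_of_eq_or_adj:
  assumes "centre_marking E cen"
  shows "centre_of E cen u = u \<or> E u (centre_of E cen u)"
proof (cases "\<not> cen u \<and> (\<exists>v. E u v)")
  case True
  then show ?thesis using centre_of_leaf[OF assms] by blast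
qed (auto simp: centre_of_def)

lemma centre_of_rtranclp:
  assumes sym: "\<And>u v. E u v \<Longrightarrow> E v u" and marking: "centre_marking E cen"
    and "E\<^sup>*\<^sup>* a b"
  shows "centre_of E cen a = centre_of E cen b"
  using \<open>E\<^sup>*\<^sup>* a b\<close>
proof (induction rule: rtranclp_induct)
  case (step b c)
  have "centre_of E cen b = centre_of E cen c"
  proof (cases "cen b")
    case True
    then have "\<not> cen c" using marking step(2) unfolding centre_marking_def by blast
    then show ?thesis
      using True centre_of_leaf[OF marking _ sym[OF step(2)]] by (simp add: centre_of_def)
  next
    case False
    then have "cen c" using marking step(2) unfolding centre_marking_def by blast
    then show ?thesis
      using False centre_of_leaf[OF marking _ step(2)] by (simp add: centre_of_def)
  qed
  then show ?case using step(3) by simp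
qed simp

lemma star_forest_if_centre_marking:
  assumes graph: "graph_on V E" and marking: "centre_marking E cen"
  shows "star_forest V E"
  unfolding star_forest_def
proof (intro conjI graph ballI)
  have sym: "E u v \<Longrightarrow> E v u" and in_V: "E u v \<Longrightarrow> v \<in> V" for u v
    using graph unfolding graph_on_def by blast+
  fix v assume v: "v \<in> V"
  let ?\<rho> = "centre_of E cen v"
  show "is_star E (component V E v)"
  proof (rule is_star_if_hub[where \<rho> = ?\<rho>])
    show "?\<rho> \<in> component V E v"
      using centre_of_eq_or_adj[OF marking, of v] v in_V unfolding component_def by auto
  next
    fix x assume "x \<in> component V E v" "x \<noteq> ?\<rho>"
    then have "centre_of E cen x = ?\<rho>" "?\<rho> \<noteq> x"
      using centre_of_rtranclp[OF sym marking] unfolding component_def by auto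
    moreover from this have "\<not> cen x" unfolding centre_of_def by auto
    ultimately show "E x ?\<rho>" and "E x y \<Longrightarrow> y = ?\<rho>" for y
      using centre_of_eq_or_adj[OF marking, of x] centre_of_leaf[OF marking] by metis+
  qed (use sym in blast)
qed

lemma star_forest_adjacent_degree_le_1:
  assumes "finite V" and sf: "star_forest V E" and uw: "E u w"
  shows "card {y \<in> V. E u y} \<le> 1 \<or> card {y \<in> V. E w y} \<le> 1"
proof (rule ccontr)
  assume big: "\<not> ?thesis"
  have "graph_on V E" using sf unfolding star_forest_def by blast
  then have in_V: "u \<in> V" "w \<in> V" and "u \<noteq> w" using uw unfolding graph_on_def by blast+
  define C where "C = component V E u"
  have nbrs_in_C: "{y \<in> C. E x y} = {y \<in> V. E x y}" if "E\<^sup>*\<^sup>* u x" for x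
    using that unfolding C_def component_def by (auto intro: rtranclp.rtrancl_into_rtrancl)
  have "is_star E C" using sf in_V unfolding star_forest_def C_def by blast
  then have "card {v \<in> C. card {y \<in> C. E v y} > 1} \<le> 1" unfolding is_star_def by blast
  moreover have "{u, w} \<subseteq> {v \<in> C. card {y \<in> C. E v y} > 1}"
    using big nbrs_in_C[of u] nbrs_in_C[of w] r_into_rtranclp[of E, OF uw] in_V
    unfolding C_def component_def by auto
  moreover have "finite {v \<in> C. card {y \<in> C. E v y} > 1}"
    using \<open>finite V\<close> unfolding C_def component_def by simp
  ultimately have "card {u, w} \<le> 1" using card_mono le_trans by blast
  then show False using \<open>u \<noteq> w\<close> by simp
qed

lemma star_forest_centre_marking:
  assumes "finite V" and sf: "star_forest V E"
  obtains cen where "centre_marking E cen"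
proof
  define deg where "deg v = card {y \<in> V. E v y}" for v
  have "graph_on V E" using sf unfolding star_forest_def by blast
  then have sym: "E u v \<Longrightarrow> E v u" and in_V: "E u v \<Longrightarrow> v \<in> V" and irrefl: "\<not> E u u" for u v
    unfolding graph_on_def by blast+
  have unique: "a = b" if "deg v \<le> 1" "E v a" "E v b" for v a b
    using that in_V \<open>finite V\<close> card_le_Suc0_iff_eq[of "{y \<in> V. E v y}"] unfolding deg_def by auto
  have not_both_big: "deg u \<le> 1 \<or> deg w \<le> 1" if "E u w" for u w
    using star_forest_adjacent_degree_le_1[OF assms that] unfolding deg_def .
  define cen where "cen v \<longleftrightarrow> 2 \<le> deg v \<or> (\<exists>u. E v u \<and> deg u \<le> 1 \<and> v < u)" for v
  have leaf_of_big: "\<not> cen v" if "E u v" "2 \<le> deg u" for u v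
  proof -
    have "deg v \<le> 1" using not_both_big[OF that(1)] that(2) by linarith
    moreover have "x = u" if "E v x" for x using unique[OF \<open>deg v \<le> 1\<close> that] sym \<open>E u v\<close> by blast
    ultimately show ?thesis using that(2) unfolding cen_def by fastforce
  qed
  have small_centre_below: "u < v" if "cen u" "deg u \<le> 1" "E u v" for u v
    using that unique unfolding cen_def by force
  have "\<not> (cen u \<and> cen v)" if uv: "E u v" for u v
  proof (cases "2 \<le> deg u \<or> 2 \<le> deg v")
    case True
    then show ?thesis using leaf_of_big[OF uv] leaf_of_big[OF sym[OF uv]] by blast
  next
    case False
    then show ?thesis
      using small_centre_below[OF _ _ uv] small_centre_below[OF _ _ sym[OF uv]] by fastforce
  qed
  moreover have "cen u \<or> cen v" if "E u v" for u v
  proof (cases "2 \<le> deg u \<or> 2 \<le> deg v")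
    case False
    then have "deg u \<le> 1" "deg v \<le> 1" by auto
    moreover have "u \<noteq> v" using irrefl that by blast
    ultimately show ?thesis using that sym unfolding cen_def by (auto dest: linorder_neqE_nat)
  qed (auto simp: cen_def)
  moreover have "a = b" if "\<not> cen v" "E v a" "E v b" for v a b
    using that unique[of v a b] unfolding cen_def by linarith
  ultimately show "centre_marking E cen"
    unfolding centre_marking_def by blast
qed

section \<open>Hall's theorem\<close>

definition hall_condition :: "'a set \<Rightarrow> ('a \<Rightarrow> 'b set) \<Rightarrow> bool" where
  "hall_condition I A \<longleftrightarrow> (\<forall>F \<subseteq> I. card F \<le> card (\<Union>(A ` F)))"

lemma hall_condition_finite:
  assumes "hall_condition I A" "i \<in> I"
  shows "finite (A i)"
proof -
  have "card {i} \<le> card (\<Union>(A ` {i}))"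
    using assms(1)[unfolded hall_condition_def, rule_format, of "{i}"] assms(2) by simp
  then have "card (A i) \<noteq> 0" by simp
  then show ?thesis by (meson card.infinite)
qed

lemma hall_condition_delete_violator:
  assumes hall: "hall_condition I A" and "finite I"
    and violated: "\<not> hall_condition I (A(i := A i - {z}))"
  shows "\<exists>F \<subseteq> I - {i}. card ((A i - {z}) \<union> \<Union>(A ` F)) \<le> card F"
proof -
  obtain F where F: "F \<subseteq> I" "card (\<Union>((A(i := A i - {z})) ` F)) < card F"
    using violated unfolding hall_condition_def by (meson not_le)
  have "i \<in> F"
  proof (rule ccontr)
    assume "i \<notin> F"
    then have "(A(i := A i - {z})) ` F = A ` F" by (intro image_cong) auto
    then show False using hall[unfolded hall_condition_def, rule_format, OF F(1)] F(2)
      by (metis not_le)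
  qed
  then have union: "\<Union>((A(i := A i - {z})) ` F) = (A i - {z}) \<union> \<Union>(A ` (F - {i}))"
    by (simp only: fun_upd_image if_True Union_insert)
  have "card F = Suc (card (F - {i}))"
    using \<open>i \<in> F\<close> finite_subset[OF F(1) \<open>finite I\<close>] by (intro card.remove)
  then have "card ((A i - {z}) \<union> \<Union>(A ` (F - {i}))) \<le> card (F - {i})"
    using F(2) unfolding union by linarith
  then show ?thesis using F(1) by blast
qed

text \<open>Rado's proof of Hall's theorem: if some \<open>A i\<close> has two elements, one of them can be
  deleted without violating Hall's condition. Two violators for the two deletions would, by
  submodularity of \<open>card\<close>, yield a violator of Hall's condition for \<open>A\<close> itself.\<close>

lemma hall_condition_delete:
  assumes hall: "hall_condition I A" and "finite I" and i: "i \<in> I"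
    and x: "x \<in> A i" and y: "y \<in> A i" "x \<noteq> y"
  shows "hall_condition I (A(i := A i - {x})) \<or> hall_condition I (A(i := A i - {y}))"
proof (rule ccontr)
  note hall_le = hall[unfolded hall_condition_def, rule_format]
  assume "\<not> ?thesis"
  then obtain F1 F2 where F: "F1 \<subseteq> I - {i}" "F2 \<subseteq> I - {i}"
    and F1: "card ((A i - {x}) \<union> \<Union>(A ` F1)) \<le> card F1"
    and F2: "card ((A i - {y}) \<union> \<Union>(A ` F2)) \<le> card F2"
    using hall_condition_delete_violator[OF hall \<open>finite I\<close>] by (meson de_Morgan_disj)
  have fin_F: "finite F1" "finite F2" using F finite_subset[OF _ \<open>finite I\<close>] by blast+
  define U1 where "U1 = (A i - {x}) \<union> \<Union>(A ` F1)"
  define U2 where "U2 = (A i - {y}) \<union> \<Union>(A ` F2)"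
  have "U1 \<subseteq> \<Union>(A ` insert i F1)" "U2 \<subseteq> \<Union>(A ` insert i F2)"
    unfolding U1_def U2_def by auto
  moreover have "finite (\<Union>(A ` insert i F1))" "finite (\<Union>(A ` insert i F2))"
    using fin_F F i hall_condition_finite[OF hall] by auto
  ultimately have fin_U: "finite U1" "finite U2" using finite_subset by metis+
  have "card (insert i (F1 \<union> F2)) \<le> card (\<Union>(A ` insert i (F1 \<union> F2)))"
    using F i by (intro hall_le) auto
  also have "\<dots> \<le> card (U1 \<union> U2)"
    using x y fin_U unfolding U1_def U2_def by (intro card_mono) auto
  finally have union: "card (F1 \<union> F2) + 1 \<le> card (U1 \<union> U2)"
    using F fin_F by (simp add: subset_Diff_insert)
  have "card (F1 \<inter> F2) \<le> card (\<Union>(A ` (F1 \<inter> F2)))"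
    using F by (intro hall_le) auto
  also have "\<dots> \<le> card (U1 \<inter> U2)"
    using fin_U unfolding U1_def U2_def by (intro card_mono) auto
  finally have inter: "card (F1 \<inter> F2) \<le> card (U1 \<inter> U2)" .
  have "card F1 + card F2 = card (F1 \<union> F2) + card (F1 \<inter> F2)"
    using fin_F by (rule card_Un_Int)
  moreover have "card U1 + card U2 = card (U1 \<union> U2) + card (U1 \<inter> U2)"
    using fin_U by (rule card_Un_Int)
  ultimately show False using union inter F1 F2 unfolding U1_def U2_def by linarith
qed

lemma hall_condition_singletons:
  assumes hall: "hall_condition I A" and single: "\<And>i. i \<in> I \<Longrightarrow> card (A i) \<le> 1"
  shows "\<exists>f. (\<forall>i \<in> I. f i \<in> A i) \<and> inj_on f I"
proof -
  note hall_le = hall[unfolded hall_condition_def, rule_format]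
  have "\<exists>x. A i = {x}" if "i \<in> I" for i
  proof -
    have "card {i} \<le> card (\<Union>(A ` {i}))" using hall_le[of "{i}"] that by simp
    then have "card (A i) = 1" using single[OF that] by simp
    then show ?thesis by (simp add: card_1_singleton_iff)
  qed
  then obtain f where f: "\<And>i. i \<in> I \<Longrightarrow> A i = {f i}" by metis
  have "inj_on f I"
  proof (rule inj_onI, rule ccontr)
    fix i j assume ij: "i \<in> I" "j \<in> I" "f i = f j" "i \<noteq> j"
    then have "\<Union>(A ` {i, j}) = {f i}" using f by simp
    then show False using hall_le[of "{i, j}"] ij by simp
  qed
  then show ?thesis using f by auto
qed

theorem hall_marriage:
  assumes "finite I" and "hall_condition I A"
  shows "\<exists>f. (\<forall>i \<in> I. f i \<in> A i) \<and> inj_on f I"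
  using assms(2)
proof (induction "\<Sum>i \<in> I. card (A i)" arbitrary: A rule: less_induct)
  case less
  show ?case
  proof (cases "\<exists>i \<in> I. 2 \<le> card (A i)")
    case False
    then show ?thesis using hall_condition_singletons[OF less.prems] by fastforce
  next
    case True
    then obtain i where i: "i \<in> I" "2 \<le> card (A i)" by blast
    then obtain T where "T \<subseteq> A i" "card T = 2" by (meson obtain_subset_with_card_n)
    then obtain x y where xy: "x \<in> A i" "y \<in> A i" "x \<noteq> y" by (auto simp: card_2_iff)
    obtain z where z: "z \<in> A i" and hall': "hall_condition I (A(i := A i - {z}))"
      using hall_condition_delete[OF less.prems \<open>finite I\<close> i(1) xy] xy by blast
    have "(\<Sum>j \<in> I. card ((A(i := A i - {z})) j)) < (\<Sum>j \<in> I. card (A j))"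
    proof (rule sum_strict_mono_ex1[OF \<open>finite I\<close>])
      have fin: "finite (A j)" if "j \<in> I" for j using hall_condition_finite[OF less.prems that] .
      then show "\<forall>j \<in> I. card ((A(i := A i - {z})) j) \<le> card (A j)" by (simp add: card_mono)
      show "\<exists>j \<in> I. card ((A(i := A i - {z})) j) < card (A j)"
        using i z fin[OF i(1)] by (intro bexI[of _ i]) (auto simp: card_Diff1_less)
    qed
    then obtain f where "\<forall>j \<in> I. f j \<in> (A(i := A i - {z})) j" "inj_on f I"
      using less.hyps hall' by blast
    then show ?thesis by (metis DiffD1 fun_upd_apply)
  qed
qed

lemma hall_capacity:
  assumes "finite I" and cap: "\<And>F. F \<subseteq> I \<Longrightarrow> card F \<le> c * card (\<Union>(N ` F))"
  obtains f where "\<And>i. i \<in> I \<Longrightarrow> f i \<in> N i" and "\<And>w. card {i \<in> I. f i = w} \<le> c"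
proof -
  \<comment> \<open>Apply Hall's theorem to \<open>c\<close> copies of each element.\<close>
  define B where "B i = N i \<times> {..<c}" for i
  have "\<Union>(B ` F) = \<Union>(N ` F) \<times> {..<c}" for F unfolding B_def by auto
  then have "hall_condition I B"
    unfolding hall_condition_def using cap by (simp add: card_cartesian_product mult.commute)
  then obtain g where g: "\<forall>i \<in> I. g i \<in> B i" "inj_on g I"
    using hall_marriage[OF \<open>finite I\<close>] by blast
  show thesis
  proof
    show "fst (g i) \<in> N i" if "i \<in> I" for i using g(1) that unfolding B_def by auto
    fix w
    have "inj_on (\<lambda>i. snd (g i)) {i \<in> I. fst (g i) = w}"
      using g(2) by (auto intro!: inj_onI simp: inj_on_def prod_eq_iff)
    moreover have "(\<lambda>i. snd (g i)) ` {i \<in> I. fst (g i) = w} \<subseteq> {..<c}"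
      using g(1) unfolding B_def by auto
    ultimately show "card {i \<in> I. fst (g i) = w} \<le> c"
      by (metis card_inj_on_le card_lessThan finite_lessThan)
  qed
qed

section \<open>Families of \<open>2 d + 1\<close> star forests are cooperatively colourable\<close>

lemma coop_coloring_if_leaves_avoid_centres:
  assumes marking: "\<And>i. i < k \<Longrightarrow> centre_marking (G i) (cen i)"
    and sym: "\<And>i u v. i < k \<Longrightarrow> G i u v \<Longrightarrow> G i v u"
    and col: "\<And>v. v \<in> V \<Longrightarrow> col v < k"
    and safe: "\<And>v u. v \<in> V \<Longrightarrow> u \<in> V \<Longrightarrow> \<not> cen (col v) v \<Longrightarrow> G (col v) v u \<Longrightarrow> col u \<noteq> col v"
  shows "coop_coloring V G k"
  unfolding coop_coloring_def
proof (intro exI[of _ "\<lambda>i. {v \<in> V. col v = i}"] conjI allI impI)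
  fix i assume i: "i < k"
  show "{v \<in> V. col v = i} \<subseteq> V" by blast
  have "\<not> G i u v" if "u \<in> V" "v \<in> V" "col u = i" "col v = i" for u v
  proof
    assume uv: "G i u v"
    have "cen i u \<longleftrightarrow> \<not> cen i v" using marking[OF i] uv unfolding centre_marking_def by simp
    then show False using safe[of u v] safe[of v u] sym[OF i uv] uv that by auto
  qed
  then show "independent (G i) {v \<in> V. col v = i}" unfolding independent_def by blast
next
  show "V = (\<Union>i<k. {v \<in> V. col v = i})" using col by auto
qed

lemma card_le_mult_if_covered:
  assumes "finite Q" and cover: "P \<subseteq> (\<Union>q \<in> Q. B q)"
    and fin: "\<And>q. q \<in> Q \<Longrightarrow> finite (B q)" and small: "\<And>q. q \<in> Q \<Longrightarrow> card (B q) \<le> c"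
  shows "card P \<le> c * card Q"
proof -
  have "card P \<le> card (\<Union>q \<in> Q. B q)" using cover assms(1) fin by (intro card_mono) auto
  also have "\<dots> \<le> (\<Sum>q \<in> Q. card (B q))" using assms(1) by (rule card_UN_le)
  also have "\<dots> \<le> (\<Sum>q \<in> Q. c)" using small by (rule sum_mono)
  finally show ?thesis by (simp add: mult.commute)
qed

locale centred_family =
  fixes V :: "nat set" and G :: "nat \<Rightarrow> nat \<Rightarrow> nat \<Rightarrow> bool"
    and cen :: "nat \<Rightarrow> nat \<Rightarrow> bool" and k d :: nat
  assumes finite_V: "finite V"
    and graph: "i < k \<Longrightarrow> graph_on V (G i)"
    and marking: "i < k \<Longrightarrow> centre_marking (G i) (cen i)"
    and max_deg: "i < k \<Longrightarrow> max_deg_le V (G i) d"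
    and many_graphs: "2 * d + 1 \<le> k"
begin

lemma graph_sym: "i < k \<Longrightarrow> G i u v \<Longrightarrow> G i v u"
  using graph unfolding graph_on_def by blast

lemma adj_in_V: "i < k \<Longrightarrow> G i u v \<Longrightarrow> v \<in> V"
  using graph unfolding graph_on_def by blast

lemma leaf_adj_centre: "i < k \<Longrightarrow> G i u v \<Longrightarrow> \<not> cen i u \<Longrightarrow> cen i v"
  using marking unfolding centre_marking_def by simp

lemma leaf_unique:
  assumes "i < k" "\<not> cen i v" "G i v a" "G i v b"
  shows "a = b"
  using marking[OF assms(1)] assms(2-) unfolding centre_marking_def by blast

text \<open>Since \<open>k \<ge> 2 d + 1\<close>, every vertex is a leaf in at least \<open>d + 1\<close> of the graphs
  (\<open>leafy\<close>) or a centre in at least \<open>d + 1\<close> of them (\<open>central\<close>). A central vertex reserves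
  \<open>d + 1\<close> of its centre graphs as candidate colours; a leafy vertex is \<open>hard\<close> if in each of
  its leaf graphs its centre is central and has reserved that colour.\<close>

definition leaf_graphs :: "nat \<Rightarrow> nat set" where
  "leaf_graphs v = {i. i < k \<and> \<not> cen i v}"

definition centre_graphs :: "nat \<Rightarrow> nat set" where
  "centre_graphs v = {i. i < k \<and> cen i v}"

definition leafy :: "nat set" where
  "leafy = {v \<in> V. d + 1 \<le> card (leaf_graphs v)}"

definition central :: "nat set" where
  "central = V - leafy"

definition reserved :: "nat \<Rightarrow> nat set" where
  "reserved w = (SOME T. T \<subseteq> centre_graphs w \<and> card T = d + 1)"

definition threatened :: "nat \<Rightarrow> nat \<Rightarrow> bool" where
  "threatened v i \<longleftrightarrow> (\<exists>w \<in> central. G i v w \<and> i \<in> reserved w)"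

definition hard :: "nat set" where
  "hard = {v \<in> leafy. \<forall>i \<in> leaf_graphs v. threatened v i}"

definition threats :: "nat \<Rightarrow> nat set" where
  "threats v = {w \<in> central. \<exists>i \<in> leaf_graphs v. G i v w \<and> i \<in> reserved w}"

lemma central_many_centre_graphs:
  assumes "w \<in> central"
  shows "d + 1 \<le> card (centre_graphs w)"
proof -
  have "leaf_graphs w \<union> centre_graphs w = {..<k}" "leaf_graphs w \<inter> centre_graphs w = {}"
    unfolding leaf_graphs_def centre_graphs_def by auto
  then have "card (leaf_graphs w) + card (centre_graphs w) = k"
    by (metis card_Un_disjoint card_lessThan finite_Un finite_lessThan)
  moreover have "card (leaf_graphs w) \<le> d" using assms unfolding central_def leafy_def by auto
  ultimately show ?thesis using many_graphs by linarith
qed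

lemma reserved_spec:
  assumes "w \<in> central"
  shows "reserved w \<subseteq> centre_graphs w" and "card (reserved w) = d + 1"
    and "finite (reserved w)"
proof -
  have "\<exists>T. T \<subseteq> centre_graphs w \<and> card T = d + 1"
    using central_many_centre_graphs[OF assms] by (meson obtain_subset_with_card_n)
  then have "reserved w \<subseteq> centre_graphs w \<and> card (reserved w) = d + 1"
    unfolding reserved_def by (rule someI_ex)
  then show "reserved w \<subseteq> centre_graphs w" and "card (reserved w) = d + 1"
    and "finite (reserved w)" using card.infinite by fastforce+
qed

lemma hard_leaf_graphs_covered:
  assumes F: "F \<subseteq> hard"
  shows "Sigma F leaf_graphs \<subseteq> (\<Union>(w, i) \<in> Sigma (\<Union>(threats ` F)) reserved. {v \<in> V. G i w v} \<times> {i})"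
proof (rule subsetI, elim SigmaE)
  fix p v i assume p: "p = (v, i)" and v: "v \<in> F" and i: "i \<in> leaf_graphs v"
  then obtain w where w: "w \<in> central" "G i v w" "i \<in> reserved w"
    using F unfolding hard_def threatened_def by blast
  then have "(w, i) \<in> Sigma (\<Union>(threats ` F)) reserved" using v i unfolding threats_def by blast
  moreover have "v \<in> {v \<in> V. G i w v}"
    using graph_sym w(2) v F i unfolding leaf_graphs_def hard_def leafy_def by blast
  ultimately show "p \<in> (\<Union>(w, i) \<in> Sigma (\<Union>(threats ` F)) reserved. {v \<in> V. G i w v} \<times> {i})"
    using p by blast
qed

text \<open>Double counting: a hard vertex has at least \<open>d + 1\<close> leaf graphs, each leading to a pair
  of a threatening centre and one of its reserved colours, and such a pair is reached from at
  most \<open>d\<close> vertices.\<close>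

lemma card_hard_le:
  assumes F: "F \<subseteq> hard"
  shows "card F \<le> d * card (\<Union>(threats ` F))"
proof -
  define M where "M = \<Union>(threats ` F)"
  have "F \<subseteq> V" using F unfolding hard_def leafy_def by blast
  then have fin_F: "finite F" using finite_V finite_subset by blast
  have M_central: "M \<subseteq> central" unfolding M_def threats_def by blast
  then have fin_M: "finite M" using finite_V finite_subset unfolding central_def by blast
  have "card F * (d + 1) \<le> (\<Sum>v \<in> F. card (leaf_graphs v))"
    using sum_bounded_below[of F "d + 1" "\<lambda>v. card (leaf_graphs v)"] F
    unfolding hard_def leafy_def by auto
  also have "\<dots> = card (Sigma F leaf_graphs)"
    using fin_F by (simp add: leaf_graphs_def)
  also have "\<dots> \<le> d * card (Sigma M reserved)"
  proof (rule card_le_mult_if_covered)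
    show "Sigma F leaf_graphs \<subseteq> (\<Union>(w, i) \<in> Sigma M reserved. {v \<in> V. G i w v} \<times> {i})"
      using hard_leaf_graphs_covered[OF F] unfolding M_def .
    show "finite (Sigma M reserved)" using fin_M M_central reserved_spec(3) by blast
    show "card (case q of (w, i) \<Rightarrow> {v \<in> V. G i w v} \<times> {i}) \<le> d"
      if q: "q \<in> Sigma M reserved" for q
    proof -
      obtain w i where wi: "q = (w, i)" "w \<in> M" "i \<in> reserved w" using q by blast
      then have "w \<in> V" "i < k"
        using M_central reserved_spec(1) unfolding central_def centre_graphs_def by auto
      then show ?thesis
        using wi(1) max_deg unfolding max_deg_le_def by (simp add: card_cartesian_product)
    qed
  qed (auto simp: finite_V)
  also have "\<dots> = d * (\<Sum>w \<in> M. card (reserved w))"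
    using fin_M M_central reserved_spec(3) by (simp add: subset_iff)
  also have "\<dots> = (d * card M) * (d + 1)"
    using reserved_spec(2) M_central by (simp add: subset_iff algebra_simps)
  finally have "card F \<le> d * card M" by (rule mult_right_le_imp_le) simp
  then show ?thesis unfolding M_def .
qed

lemma finite_hard: "finite hard"
  using finite_V unfolding hard_def leafy_def by simp

lemma hard_assignment:
  obtains f where "\<And>v. v \<in> hard \<Longrightarrow> f v \<in> threats v" and "\<And>w. card {v \<in> hard. f v = w} \<le> d"
  using hall_capacity[OF finite_hard card_hard_le] by blast

lemma free_reserved_colour:
  assumes "w \<in> central" and "card {v \<in> hard. f v = w} \<le> d"
  shows "\<exists>i. i \<in> reserved w \<and> i \<notin> g ` {v \<in> hard. f v = w}"
proof (rule ccontr)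
  assume "\<not> ?thesis"
  then have "reserved w \<subseteq> g ` {v \<in> hard. f v = w}" by blast
  moreover have fin: "finite {v \<in> hard. f v = w}" using finite_hard by simp
  ultimately have "card (reserved w) \<le> card (g ` {v \<in> hard. f v = w})"
    by (intro card_mono) simp_all
  also have "\<dots> \<le> card {v \<in> hard. f v = w}" using fin by (rule card_image_le)
  finally show False using reserved_spec(2)[OF assms(1)] assms(2) by simp
qed

text \<open>Central vertices take a reserved centre colour and leafy vertices a leaf colour, so a
  clash can only occur between a leafy vertex and its centre. A hard vertex takes the colour of
  its edge to the centre assigned to it; that centre serves at most \<open>d\<close> hard vertices and
  so keeps one of its \<open>d + 1\<close> reserved colours free.\<close>

lemma colouring_clash_free:
  assumes col_leafy: "\<And>v. v \<in> leafy \<Longrightarrow> col v \<in> leaf_graphs v"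
    and col_central: "\<And>w. w \<in> central \<Longrightarrow> col w \<in> reserved w"
    and col_easy: "\<And>v. v \<in> leafy - hard \<Longrightarrow> \<not> threatened v (col v)"
    and col_hard: "\<And>v. v \<in> hard \<Longrightarrow> G (col v) v (f v) \<and> col (f v) \<noteq> col v"
    and v: "v \<in> V" and leaf: "\<not> cen (col v) v" and vu: "G (col v) v u"
  shows "col u \<noteq> col v"
proof -
  have "v \<in> leafy"
    using v leaf col_central reserved_spec(1) unfolding central_def centre_graphs_def by blast
  then have i: "col v < k" using col_leafy unfolding leaf_graphs_def by blast
  have "u \<in> V" "cen (col v) u" using adj_in_V[OF i vu] leaf_adj_centre[OF i vu leaf] by auto
  consider "u \<in> leafy" | "u \<in> central" "v \<in> hard" | "u \<in> central" "v \<in> leafy - hard"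
    using \<open>u \<in> V\<close> \<open>v \<in> leafy\<close> unfolding central_def by blast
  then show ?thesis
  proof cases
    case 1
    then show ?thesis using col_leafy[of u] \<open>cen (col v) u\<close> unfolding leaf_graphs_def by auto
  next
    case 2
    then have "f v = u" using col_hard leaf_unique[OF i leaf _ vu] by blast
    then show ?thesis using col_hard 2 by blast
  next
    case 3
    then show ?thesis using col_easy[OF 3(2)] col_central[OF 3(1)] vu unfolding threatened_def by auto
  qed
qed

lemma clash_free_colouring_exists:
  obtains col f where "\<And>v. v \<in> leafy \<Longrightarrow> col v \<in> leaf_graphs v"
    and "\<And>w. w \<in> central \<Longrightarrow> col w \<in> reserved w"
    and "\<And>v. v \<in> leafy - hard \<Longrightarrow> \<not> threatened v (col v)"
    and "\<And>v. v \<in> hard \<Longrightarrow> G (col v) v (f v) \<and> col (f v) \<noteq> col v"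
proof -
  obtain f where f: "\<And>v. v \<in> hard \<Longrightarrow> f v \<in> threats v"
    and fibre: "\<And>w. card {v \<in> hard. f v = w} \<le> d"
    using hard_assignment by blast
  have "\<forall>v \<in> hard. \<exists>i. i \<in> leaf_graphs v \<and> G i v (f v)"
    using f unfolding threats_def by blast
  then obtain hc where hc: "\<forall>v \<in> hard. hc v \<in> leaf_graphs v \<and> G (hc v) v (f v)"
    by (rule bchoice[THEN exE])
  have "\<forall>v \<in> leafy - hard. \<exists>i. i \<in> leaf_graphs v \<and> \<not> threatened v i"
    unfolding hard_def by blast
  then obtain ec where ec: "\<forall>v \<in> leafy - hard. ec v \<in> leaf_graphs v \<and> \<not> threatened v (ec v)"
    by (rule bchoice[THEN exE])
  have "\<forall>w \<in> central. \<exists>i. i \<in> reserved w \<and> i \<notin> hc ` {v \<in> hard. f v = w}"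
    using free_reserved_colour fibre by blast
  then obtain cc where cc: "\<forall>w \<in> central. cc w \<in> reserved w \<and> cc w \<notin> hc ` {v \<in> hard. f v = w}"
    by (rule bchoice[THEN exE])
  define col where "col v = (if v \<in> hard then hc v else if v \<in> leafy then ec v else cc v)" for v
  have hard_leafy: "hard \<subseteq> leafy" and threats_central: "threats v \<subseteq> central" for v
    unfolding hard_def threats_def by auto
  show thesis
  proof (rule that[of col f])
    show "col v \<in> leaf_graphs v" if "v \<in> leafy" for v
      using hc ec that unfolding col_def by auto
    show "col w \<in> reserved w" if "w \<in> central" for w
      using cc that hard_leafy unfolding col_def central_def by auto
    show "\<not> threatened v (col v)" if "v \<in> leafy - hard" for v
      using ec that unfolding col_def by auto
    show "G (col v) v (f v) \<and> col (f v) \<noteq> col v" if "v \<in> hard" for v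
    proof
      show "G (col v) v (f v)" using hc that unfolding col_def by simp
      have "f v \<in> central" using f[OF that] threats_central by blast
      then have "col (f v) = cc (f v)" using hard_leafy unfolding col_def central_def by auto
      moreover have "col v \<in> hc ` {u \<in> hard. f u = f v}" using that unfolding col_def by simp
      ultimately show "col (f v) \<noteq> col v" using cc \<open>f v \<in> central\<close> by auto
    qed
  qed
qed

lemma coop_coloring: "coop_coloring V G k"
proof -
  obtain col f where col_leafy: "\<And>v. v \<in> leafy \<Longrightarrow> col v \<in> leaf_graphs v"
    and col_central: "\<And>w. w \<in> central \<Longrightarrow> col w \<in> reserved w"
    and col_easy: "\<And>v. v \<in> leafy - hard \<Longrightarrow> \<not> threatened v (col v)"
    and col_hard: "\<And>v. v \<in> hard \<Longrightarrow> G (col v) v (f v) \<and> col (f v) \<noteq> col v"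
    using clash_free_colouring_exists by blast
  show ?thesis
  proof (rule coop_coloring_if_leaves_avoid_centres[OF marking graph_sym])
    show "col v < k" if "v \<in> V" for v
      using that col_leafy col_central reserved_spec(1)
      unfolding central_def leaf_graphs_def centre_graphs_def by blast
    show "col u \<noteq> col v" if "v \<in> V" "\<not> cen (col v) v" "G (col v) v u" for v u
      using colouring_clash_free[OF col_leafy col_central col_easy col_hard that] .
  qed
qed

end

theorem coop_coloring_star_forests:
  assumes "finite V" and "2 * d + 1 \<le> k"
    and forests: "\<forall>i<k. star_forest V (G i) \<and> max_deg_le V (G i) d"
  shows "coop_coloring V G k"
proof -
  have "\<forall>i \<in> {..<k}. \<exists>cen. centre_marking (G i) cen"
    using star_forest_centre_marking[OF \<open>finite V\<close>] forests by blast
  then obtain cen where "\<forall>i \<in> {..<k}. centre_marking (G i) (cen i)"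
    by (rule bchoice[THEN exE])
  then interpret centred_family V G cen k d
    using assms unfolding star_forest_def by unfold_locales auto
  show ?thesis by (rule coop_coloring)
qed

lemma mS_good_2d_plus_1: "mS_good d (2 * d + 1)"
  unfolding mS_good_def by (intro allI impI, elim conjE) (rule coop_coloring_star_forests)

lemma mS_good_mS: "mS_good d (mS d)"
  unfolding mS_def by (rule LeastI[of "mS_good d", OF mS_good_2d_plus_1])

section \<open>Star forests on words of distinct colours\<close>

text \<open>Words are encoded as natural numbers by \<open>to_nat\<close>, since the graphs in \<open>mS_good\<close>
  have vertices in \<open>nat\<close>.\<close>

definition words :: "nat \<Rightarrow> nat list set" where
  "words k = {xs. distinct xs \<and> set xs \<subseteq> {..<k}}"

definition word_of_nat :: "nat \<Rightarrow> nat list" where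
  "word_of_nat = from_nat"

definition word_vertices :: "nat \<Rightarrow> nat set" where
  "word_vertices k = to_nat ` words k"

definition word_graph :: "nat \<Rightarrow> nat \<Rightarrow> nat \<Rightarrow> nat \<Rightarrow> bool" where
  "word_graph k i a b \<longleftrightarrow> a \<in> word_vertices k \<and> b \<in> word_vertices k \<and>
     ((\<exists>r. word_of_nat b = word_of_nat a @ i # r) \<or> (\<exists>r. word_of_nat a = word_of_nat b @ i # r))"

lemma word_of_nat_to_nat [simp]: "word_of_nat (to_nat w) = w"
  unfolding word_of_nat_def by simp

lemma word_vertices_word_of_nat:
  "a \<in> word_vertices k \<Longrightarrow> word_of_nat a \<in> words k \<and> to_nat (word_of_nat a) = a"
  unfolding word_vertices_def by auto

lemma words_subset: "words k \<subseteq> {xs. set xs \<subseteq> {..<k} \<and> length xs \<le> k}"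
proof
  fix xs assume "xs \<in> words k"
  then have "distinct xs" "set xs \<subseteq> {..<k}" unfolding words_def by auto
  moreover from this have "length xs \<le> k"
    using distinct_card[of xs] card_mono[of "{..<k}" "set xs"] by simp
  ultimately show "xs \<in> {xs. set xs \<subseteq> {..<k} \<and> length xs \<le> k}" by simp
qed

lemma finite_words: "finite (words k)"
  using words_subset finite_lists_length_le[of "{..<k}" k] by (rule finite_subset) simp

lemma finite_word_vertices: "finite (word_vertices k)"
  unfolding word_vertices_def using finite_words by simp

lemma card_word_vertices_le: "card (word_vertices k) \<le> (k + 1) ^ (k + 1)"
proof -
  have "card (word_vertices k) \<le> card (words k)"
    unfolding word_vertices_def using finite_words by (rule card_image_le)
  also have "\<dots> \<le> card {xs. set xs \<subseteq> {..<k} \<and> length xs \<le> k}"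
    using words_subset finite_lists_length_le[of "{..<k}" k] by (intro card_mono) auto
  also have "\<dots> = (\<Sum>i\<le>k. k ^ i)" using card_lists_length_le[of "{..<k}" k] by simp
  also have "\<dots> \<le> (\<Sum>i\<le>k. (k + 1) ^ k)"
  proof (rule sum_mono)
    fix i assume "i \<in> {..k}"
    have "k ^ i \<le> (k + 1) ^ i" by (rule power_mono) auto
    also have "\<dots> \<le> (k + 1) ^ k" using \<open>i \<in> {..k}\<close> by (intro power_increasing) auto
    finally show "k ^ i \<le> (k + 1) ^ k" .
  qed
  also have "\<dots> = (k + 1) ^ (k + 1)" by simp
  finally show ?thesis .
qed

lemma word_graph_star_forest: "star_forest (word_vertices k) (word_graph k i)"
proof (rule star_forest_if_centre_marking)
  show "graph_on (word_vertices k) (word_graph k i)"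
    unfolding graph_on_def word_graph_def by auto
  have distinct: "distinct (word_of_nat a)" if "a \<in> word_vertices k" for a
    using word_vertices_word_of_nat[OF that] unfolding words_def by blast
  show "centre_marking (word_graph k i) (\<lambda>a. i \<notin> set (word_of_nat a))"
    unfolding centre_marking_def
  proof (intro conjI allI impI)
    fix u v assume "word_graph k i u v"
    then show "i \<notin> set (word_of_nat u) \<longleftrightarrow> \<not> i \<notin> set (word_of_nat v)"
      using distinct[of u] distinct[of v] unfolding word_graph_def by auto
  next
    fix v a b assume leaf: "\<not> i \<notin> set (word_of_nat v)"
      and va: "word_graph k i v a" and vb: "word_graph k i v b"
    have prefix: "word_of_nat x = takeWhile (\<lambda>y. y \<noteq> i) (word_of_nat v)"
      if vx: "word_graph k i v x" for x
    proof -
      have "word_of_nat x \<noteq> word_of_nat v @ i # r" for r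
      proof
        assume "word_of_nat x = word_of_nat v @ i # r"
        then have "\<not> distinct (word_of_nat x)" using leaf by simp
        then show False using distinct[of x] vx unfolding word_graph_def by blast
      qed
      then obtain r where r: "word_of_nat v = word_of_nat x @ i # r"
        using vx unfolding word_graph_def by blast
      then have "i \<notin> set (word_of_nat x)" using distinct[of v] vx unfolding word_graph_def by auto
      then show ?thesis unfolding r by (subst takeWhile_append2) auto
    qed
    have "word_of_nat a = word_of_nat b" using prefix[OF va] prefix[OF vb] by simp
    then show "a = b"
      using va vb word_vertices_word_of_nat unfolding word_graph_def by metis
  qed
qed

lemma word_graph_max_deg:
  assumes "(k + 1) ^ (k + 1) \<le> d"
  shows "max_deg_le (word_vertices k) (word_graph k i) d"
  unfolding max_deg_le_def
proof
  fix v
  have "card {u \<in> word_vertices k. word_graph k i v u} \<le> card (word_vertices k)"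
    using finite_word_vertices by (intro card_mono) auto
  then show "card {u \<in> word_vertices k. word_graph k i v u} \<le> d"
    using card_word_vertices_le[of k] assms by linarith
qed

definition avoiding_word :: "nat \<Rightarrow> (nat \<Rightarrow> nat set) \<Rightarrow> nat list \<Rightarrow> bool" where
  "avoiding_word k R \<sigma> \<longleftrightarrow> \<sigma> \<in> words k \<and>
     (\<forall>\<rho> i. \<sigma> @ \<rho> \<in> words k \<longrightarrow> i < k \<longrightarrow> to_nat (\<sigma> @ \<rho>) \<in> R i \<longrightarrow> i \<notin> set \<sigma>)"

text \<open>Appending the colour \<open>i\<close> of \<open>\<sigma>\<close> keeps the word avoiding, because \<open>\<sigma>\<close> is adjacent in
  \<open>G i\<close> to every extension of \<open>\<sigma> @ [i]\<close>.\<close>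

lemma avoiding_word_snoc:
  assumes indep: "independent (word_graph k i) (R i)"
    and \<sigma>: "avoiding_word k R \<sigma>" and i: "i < k" "to_nat \<sigma> \<in> R i"
  shows "avoiding_word k R (\<sigma> @ [i])"
  unfolding avoiding_word_def
proof (intro conjI allI impI)
  have "i \<notin> set \<sigma>" using \<sigma> i unfolding avoiding_word_def by (metis append_Nil2)
  then show "\<sigma> @ [i] \<in> words k" using \<sigma> i(1) unfolding avoiding_word_def words_def by auto
  fix \<rho> i' assume ext: "(\<sigma> @ [i]) @ \<rho> \<in> words k"
    and i': "i' < k" "to_nat ((\<sigma> @ [i]) @ \<rho>) \<in> R i'"
  have "i' \<notin> set \<sigma>" using \<sigma> ext i' unfolding avoiding_word_def by auto
  moreover have "i' \<noteq> i"
  proof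
    assume "i' = i"
    have "word_graph k i (to_nat \<sigma>) (to_nat ((\<sigma> @ [i]) @ \<rho>))"
      using \<sigma> ext unfolding word_graph_def word_vertices_def avoiding_word_def by auto
    then show False using indep i(2) i' \<open>i' = i\<close> unfolding independent_def by blast
  qed
  ultimately show "i' \<notin> set (\<sigma> @ [i])" by simp
qed

lemma word_graphs_not_coop_colorable: "\<not> coop_coloring (word_vertices k) (word_graph k) k"
proof
  assume "coop_coloring (word_vertices k) (word_graph k) k"
  then obtain R where indep: "\<And>i. i < k \<Longrightarrow> independent (word_graph k i) (R i)"
    and cover: "word_vertices k = (\<Union>i<k. R i)"
    unfolding coop_coloring_def by blast
  have colour: "\<exists>i<k. to_nat \<sigma> \<in> R i" if "avoiding_word k R \<sigma>" for \<sigma>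
    using cover that unfolding word_vertices_def avoiding_word_def by blast
  have "\<exists>\<sigma>. avoiding_word k R \<sigma> \<and> length \<sigma> = j" for j
  proof (induction j)
    case 0
    show ?case by (intro exI[of _ "[]"]) (simp add: avoiding_word_def words_def)
  next
    case (Suc j)
    then obtain \<sigma> i where \<sigma>: "avoiding_word k R \<sigma>" "length \<sigma> = j" "i < k" "to_nat \<sigma> \<in> R i"
      using colour by blast
    then show ?case
      using avoiding_word_snoc[OF indep[OF \<sigma>(3)] \<sigma>(1,3,4)] by (intro exI[of _ "\<sigma> @ [i]"]) simp
  qed
  then obtain \<sigma> where \<sigma>: "avoiding_word k R \<sigma>" "length \<sigma> = k" by blast
  then have "set \<sigma> = {..<k}"
    using distinct_card[of \<sigma>] unfolding avoiding_word_def words_def by (intro card_subset_eq) auto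
  moreover obtain i where "i < k" "to_nat \<sigma> \<in> R i" using colour \<sigma>(1) by blast
  ultimately show False using \<sigma>(1) unfolding avoiding_word_def by (metis append_Nil2 lessThan_iff)
qed

lemma mS_good_gt:
  assumes "mS_good d m" and "(k + 1) ^ (k + 1) \<le> d"
  shows "k < m"
proof (rule ccontr)
  assume "\<not> k < m"
  then have "coop_coloring (word_vertices k) (word_graph k) k"
    using assms(1) finite_word_vertices word_graph_star_forest word_graph_max_deg[OF assms(2)]
    unfolding mS_good_def by simp
  then show False using word_graphs_not_coop_colorable by blast
qed

section \<open>The asymptotic lower bound\<close>

lemma between_self_powers:
  assumes "1 \<le> d"
  shows "\<exists>k. (k + 1) ^ (k + 1) \<le> d \<and> d < (k + 2) ^ (k + 2)"
  using assms
proof (induction d rule: dec_induct)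
  case base
  show ?case by (intro exI[of _ 0]) simp
next
  case (step d)
  then obtain k where k: "(k + 1) ^ (k + 1) \<le> d" "d < (k + 2) ^ (k + 2)" by blast
  show ?case
  proof (cases "Suc d < (k + 2) ^ (k + 2)")
    case True
    then show ?thesis using k(1) by (intro exI[of _ k] conjI; linarith)
  next
    case False
    have "(k + 1 + 1) ^ (k + 1 + 1) < (k + 1 + 2) ^ (k + 1 + 1)" by (rule power_strict_mono) auto
    also have "\<dots> \<le> (k + 1 + 2) ^ (k + 1 + 2)" by (rule power_increasing) auto
    finally have "(k + 1 + 1) ^ (k + 1 + 1) < (k + 1 + 2) ^ (k + 1 + 2)" .
    moreover have "(k + 2) ^ (k + 2) = (k + 1 + 1) ^ (k + 1 + 1)" by (simp only: add.assoc one_add_one)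
    ultimately show ?thesis using False k(2) by (intro exI[of _ "k + 1"] conjI; linarith)
  qed
qed

lemma div_ln_le_if_le_mult_ln:
  fixes y n :: real
  assumes "0 < y" and "1 \<le> ln y" and "1 < n" and "y \<le> n * ln n"
  shows "y / ln y \<le> n"
proof (cases "n \<le> y")
  case True
  have "0 < ln n" using assms(3) by simp
  moreover have "ln n \<le> ln y" using True assms(1,3) by simp
  moreover have "0 < ln y" using assms(2) by linarith
  ultimately have "y / ln y \<le> y / ln n" using assms(1) by (intro divide_left_mono) simp_all
  also have "\<dots> \<le> n" using assms(4) \<open>0 < ln n\<close> by (simp add: divide_le_eq)
  finally show ?thesis .
next
  case False
  have "0 < ln y" using assms(2) by linarith
  then have "y / ln y \<le> y / 1" using assms(1,2) by (intro divide_left_mono) auto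
  then show ?thesis using False by simp
qed

lemma ln_div_ln_ln_le_mS:
  assumes "exp 1 \<le> ln (real d)"
  shows "ln (real d) / ln (ln (real d)) - 1 \<le> real (mS d)"
proof -
  define y where "y = ln (real d)"
  have "1 < y" using assms exp_gt_one[of 1] unfolding y_def by linarith
  then have "1 \<le> d" unfolding y_def by (cases d) auto
  then obtain k where k: "(k + 1) ^ (k + 1) \<le> d" "d < (k + 2) ^ (k + 2)"
    using between_self_powers by blast
  have "k < mS d" using mS_good_gt[OF mS_good_mS k(1)] .
  have "real d < real ((k + 2) ^ (k + 2))" using k(2) by (simp only: of_nat_less_iff)
  moreover have "0 < real d" using \<open>1 \<le> d\<close> by simp
  moreover have "0 < real ((k + 2) ^ (k + 2))" by (intro of_nat_0_less_iff[THEN iffD2] zero_less_power) simp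
  ultimately have "y < ln (real ((k + 2) ^ (k + 2)))" unfolding y_def by (simp only: ln_less_cancel_iff)
  also have "\<dots> = real (k + 2) * ln (real (k + 2))"
    by (subst of_nat_power, rule ln_realpow)
  finally have "y / ln y \<le> real (k + 2)"
    using \<open>1 < y\<close> assms ln_exp[of 1] ln_le_cancel_iff[of "exp 1" y]
    by (intro div_ln_le_if_le_mult_ln) (auto simp: y_def)
  then show ?thesis using \<open>k < mS d\<close> unfolding y_def by simp
qed

theorem theorem1:
  shows "\<exists>\<epsilon> :: nat \<Rightarrow> real. \<epsilon> \<longlonglongrightarrow> 0 \<and>
    (\<forall>\<^sub>F d in sequentially. real (mS d) \<ge> (1 + \<epsilon> d) * ln (real d) / ln (ln (real d)))"
proof (intro exI conjI)
  show "(\<lambda>d. - ln (ln (real d)) / ln (real d)) \<longlonglongrightarrow> 0" by real_asymp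
  have "\<forall>\<^sub>F d in sequentially. exp 1 \<le> ln (real d)" by real_asymp
  then show "\<forall>\<^sub>F d in sequentially.
      real (mS d) \<ge> (1 + - ln (ln (real d)) / ln (real d)) * ln (real d) / ln (ln (real d))"
  proof (rule eventually_mono)
    fix d assume d: "exp 1 \<le> ln (real d)"
    then have "1 < ln (real d)" using exp_gt_one[of 1] by linarith
    then have "0 < ln (real d)" "0 < ln (ln (real d))" by simp_all
    then have "(1 + - ln (ln (real d)) / ln (real d)) * ln (real d) / ln (ln (real d))
        = ln (real d) / ln (ln (real d)) - 1"
      by (simp add: field_simps)
    then show "real (mS d) \<ge> (1 + - ln (ln (real d)) / ln (real d)) * ln (real d) / ln (ln (real d))"
      using ln_div_ln_ln_le_mS[OF d] by simp
  qed
qed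

end
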